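(* Let $(X,T)$ be a topological dynamical system, $(x,y)\in X^2$, and $\Delta_X=\{(z,z):z\in X\}$. Let $Z=\overline{\{(T^nx,T^ny):n\in\mathbb{Z}_+\}}\subset X^2$. The following are equivalent: (1) $(x,y)$ is Banach proximal; (2) $\operatorname{supp}(Z,T\times T)\subset\Delta_X$; (3) $Z\subset BP(X,T)$.
   Context: A topological dynamical system $(X,T)$ consists of a non-empty compact metric space $(X,d)$ and a continuous map $T:X\to X$. A set $F\subset\mathbb{Z}_+$ has Banach density one if for every $\lambda<1$ there is $N\ge1$ with $\#(F\cap I)\ge\lambda\,\#(I)$ for every interval of integers $I\subset\mathbb{Z}_+$ with $\#(I)\ge N$. A pair $(x,y)$ is Banach proximal if for every $\varepsilon>0$ the set $\{n\in\mathbb{Z}_+: d(T^nx,T^ny)<\varepsilon\}$ has Banach density one; $BP(X,T)$ is the set of Banach proximal pairs. For a system $(Y,S)$, $M(Y,S)$ is the set of $S$-invariant Borel probability measures and $\operatorname{supp}(Y,S)$ is the smallest closed set $C\subset Y$ with $\mu(C)=1$ for all $\mu\in M(Y,S)$. *)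

theory Defs
  imports "HOL-Probability.Probability"
begin

definition tds :: "'a::metric_space set \<Rightarrow> ('a \<Rightarrow> 'a) \<Rightarrow> bool" where
  "tds X T \<longleftrightarrow> X \<noteq> {} \<and> compact X \<and> continuous_on X T \<and> T ` X \<subseteq> X"

text \<open>Banach density one; intervals of integers in Z_+ with at least N elements
  are exactly the sets {a..<a+n} with n >= N.\<close>
definition banach_density_one :: "nat set \<Rightarrow> bool" where
  "banach_density_one F \<longleftrightarrow>
     (\<forall>c::real. c < 1 \<longrightarrow> (\<exists>N\<ge>1. \<forall>a n. n \<ge> N \<longrightarrow>
        real (card (F \<inter> {a..<a+n})) \<ge> c * real n))"

definition banach_proximal :: "('a::metric_space \<Rightarrow> 'a) \<Rightarrow> 'a \<Rightarrow> 'a \<Rightarrow> bool" where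
  "banach_proximal T x y \<longleftrightarrow>
     (\<forall>\<epsilon>>0. banach_density_one {n. dist ((T ^^ n) x) ((T ^^ n) y) < \<epsilon>})"

definition BP :: "'a::metric_space set \<Rightarrow> ('a \<Rightarrow> 'a) \<Rightarrow> ('a \<times> 'a) set" where
  "BP X T = {(x, y). x \<in> X \<and> y \<in> X \<and> banach_proximal T x y}"

definition inv_measures :: "'b::topological_space set \<Rightarrow> ('b \<Rightarrow> 'b) \<Rightarrow> 'b measure set" where
  "inv_measures Y S = {\<mu>. prob_space \<mu> \<and> sets \<mu> = sets (restrict_space borel Y) \<and>
      S \<in> measurable \<mu> \<mu> \<and> (\<forall>A\<in>sets \<mu>. emeasure \<mu> (S -` A \<inter> Y) = emeasure \<mu> A)}"

text \<open>supp(Y,S): smallest closed subset of Y of full measure for all invariant measures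
  (realised as the intersection of all such sets).\<close>
definition supp_sys :: "'b::topological_space set \<Rightarrow> ('b \<Rightarrow> 'b) \<Rightarrow> 'b set" where
  "supp_sys Y S = \<Inter>{C. closed C \<and> C \<subseteq> Y \<and> (\<forall>\<mu>\<in>inv_measures Y S. emeasure \<mu> C = 1)}"

end

theory Submission
  imports Defs
begin

text \<open>
  Let Z be the orbit closure of (x, y) under T \<times> T.  The proof runs around the cycle
  (1) \<Longrightarrow> (3) \<Longrightarrow> (2) \<Longrightarrow> (1):

  (1) \<Longrightarrow> (3): a point (u, v) of Z is shadowed for any finite time by an orbit point of
  (x, y), so near-coincidence times of (x, y) transfer to (u, v) (Banach density is
  translation invariant).

  (3) \<Longrightarrow> (2): for an invariant measure \<mu> on Z, the set {d \<ge> \<epsilon>} is visited with zero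
  frequency by every point of Z, so by invariance and dominated convergence it is \<mu>-null;
  hence \<mu> lives on the diagonal, and so does the support.

  (2) \<Longrightarrow> (1): if (x, y) is not Banach proximal, the orbit spends a positive fraction of
  arbitrarily long windows in the compact set F = {d \<ge> \<epsilon>} \<inter> Z.  A Krylov--Bogolyubov
  argument along these windows produces an invariant measure charging F, whereas compact
  sets disjoint from the support are null for all invariant measures.
\<close>

text \<open>The measure of a nonempty closed set C is the limit of the integrals of the continuous
  cut-off functions max 0 (1 - j * infdist z C), which decrease pointwise to the indicator of C.\<close>
lemma cutoff_integral_tendsto_measure:
  fixes M :: "'b::metric_space measure" and C :: "'b set"
  assumes fm: "finite_measure M" and Cs: "C \<in> sets M" and cl: "closed C" and ne: "C \<noteq> {}"
    and meas: "(\<lambda>z. infdist z C) \<in> borel_measurable M"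
  shows "(\<lambda>j. \<integral>z. max 0 (1 - real j * infdist z C) \<partial>M) \<longlonglongrightarrow> measure M C"
proof -
  interpret finite_measure M by fact
  have pointwise: "(\<lambda>j. max 0 (1 - real j * infdist z C)) \<longlonglongrightarrow> indicator C z" for z
  proof (cases "z \<in> C")
    case True
    then have "infdist z C = 0" using in_closed_iff_infdist_zero[OF cl ne] by simp
    then show ?thesis using True by simp
  next
    case False
    then have pos: "infdist z C > 0"
      using in_closed_iff_infdist_zero[OF cl ne] infdist_nonneg[of z C] by (simp add: order_less_le)
    obtain N :: nat where N: "real N > 1 / infdist z C" using reals_Archimedean2 by blast
    have "max 0 (1 - real j * infdist z C) = 0" if "j \<ge> N" for j
    proof -
      have "real N * infdist z C > 1" using N pos by (simp add: field_simps)
      moreover have "real j * infdist z C \<ge> real N * infdist z C"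
        using that pos by (simp add: mult_right_mono)
      ultimately show ?thesis by simp
    qed
    then have "eventually (\<lambda>j. max 0 (1 - real j * infdist z C) = 0) sequentially"
      by (auto simp: eventually_sequentially)
    then show ?thesis using False by (simp add: tendsto_eventually)
  qed
  have "(\<lambda>j. \<integral>z. max 0 (1 - real j * infdist z C) \<partial>M) \<longlonglongrightarrow> (\<integral>z. indicator C z \<partial>M)"
  proof (rule integral_dominated_convergence[where w="\<lambda>_. 1"])
    show "(\<lambda>z. max 0 (1 - real j * infdist z C)) \<in> borel_measurable M" for j
      using meas by measurable
    show "AE z in M. norm (max 0 (1 - real j * infdist z C)) \<le> 1" for j
      by (rule AE_I2) (auto simp: infdist_nonneg)
  qed (use Cs pointwise in auto)
  then show ?thesis using Cs by simp
qed

text \<open>Two finite Borel measures on a closed set Z that agree on all continuous [0,1]-valued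
  functions are equal: by the cut-offs they agree on closed sets, an intersection-stable
  generator of the Borel sets.\<close>
lemma measure_eq_by_continuous:
  fixes M N :: "'b::metric_space measure" and Z :: "'b set"
  assumes Zc: "closed Z"
    and sM: "sets M = sets (restrict_space borel Z)" and sN: "sets N = sets (restrict_space borel Z)"
    and fM: "finite_measure M" and fN: "finite_measure N"
    and eq: "\<And>f::'b\<Rightarrow>real. continuous_on UNIV f \<Longrightarrow> (\<And>z. 0 \<le> f z \<and> f z \<le> 1) \<Longrightarrow>
                 (\<integral>z. f z \<partial>M) = (\<integral>z. f z \<partial>N)"
  shows "M = N"
proof -
  interpret M: finite_measure M by fact
  interpret N: finite_measure N by fact
  define E where "E = (\<inter>) Z ` {S. closed S}"
  have sE: "sets (restrict_space borel Z) = sigma_sets Z E"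
  proof -
    have "sets (restrict_space borel Z) = (\<inter>) Z ` sigma_sets UNIV {S. closed S}"
      by (simp add: sets_restrict_space borel_eq_closed)
    also have "\<dots> = sigma_sets Z E" unfolding E_def
      by (rule sigma_sets_Int) (use Zc in auto)
    finally show ?thesis .
  qed
  show ?thesis
  proof (rule measure_eqI_generator_eq[where E=E and \<Omega>=Z and A="\<lambda>_. Z"])
    show "Int_stable E" unfolding E_def Int_stable_def
    proof clarify
      fix a b :: "'b set" assume "closed a" "closed b"
      then have "Z \<inter> a \<inter> (Z \<inter> b) = Z \<inter> (a \<inter> b) \<and> closed (a \<inter> b)" by auto
      then show "Z \<inter> a \<inter> (Z \<inter> b) \<in> (\<inter>) Z ` {S. closed S}" by blast
    qed
    show "E \<subseteq> Pow Z" "range (\<lambda>_. Z) \<subseteq> E" unfolding E_def using Zc by auto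
    show "sets M = sigma_sets Z E" "sets N = sigma_sets Z E" using sM sN sE by simp_all
    fix X assume XE: "X \<in> E"
    then have Xc: "closed X" and XsM: "X \<in> sets M" and XsN: "X \<in> sets N"
      using XE sM sN sE Zc unfolding E_def by auto
    show "emeasure M X = emeasure N X"
    proof (cases "X = {}")
      case False
      have mM: "(\<lambda>z. infdist z X) \<in> borel_measurable M"
        unfolding measurable_cong_sets[OF sM refl]
        by (rule measurable_restrict_space1) (intro borel_measurable_continuous_onI continuous_intros)
      have mN: "(\<lambda>z. infdist z X) \<in> borel_measurable N"
        unfolding measurable_cong_sets[OF sN refl]
        by (rule measurable_restrict_space1) (intro borel_measurable_continuous_onI continuous_intros)
      have "(\<integral>z. max 0 (1 - real j * infdist z X) \<partial>M) = (\<integral>z. max 0 (1 - real j * infdist z X) \<partial>N)"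
        for j by (rule eq) (auto intro!: continuous_intros simp: infdist_nonneg)
      then have "measure M X = measure N X"
        using cutoff_integral_tendsto_measure[OF fM XsM Xc False mM]
          cutoff_integral_tendsto_measure[OF fN XsN Xc False mN] LIMSEQ_unique by auto
      then show ?thesis by (simp add: M.emeasure_eq_measure N.emeasure_eq_measure)
    qed simp
  qed simp_all
qed

lemma closed_restrict_borel:
  assumes "closed A" "A \<subseteq> Z" "closed Z"
  shows "A \<in> sets (restrict_space borel Z)"
  using assms by (subst sets_restrict_space_iff) auto

lemma third_powers_sums: "(\<lambda>s. 1 / 3 ^ s :: real) sums (3/2)"
proof -
  have "(\<lambda>s. (1/3::real) ^ s) sums (1 / (1 - 1/3))" by (rule geometric_sums) simp
  then show ?thesis by (simp add: power_one_over)
qed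

lemma ternary_summable:
  fixes d :: "nat \<Rightarrow> real"
  assumes "\<And>s. \<bar>d s\<bar> \<le> 1"
  shows "summable (\<lambda>s. d s / 3 ^ s)"
proof (rule summable_comparison_test[OF _ sums_summable[OF third_powers_sums]])
  show "\<exists>N. \<forall>n\<ge>N. norm (d n / 3 ^ n) \<le> 1 / 3 ^ n"
    using assms by (auto simp: abs_divide divide_right_mono)
qed

text \<open>A ternary expansion whose first nonzero digit (with digits in [-1,1]) sits at
  position t and has absolute value 1 is at least 1/(2*3^t) in absolute value:
  the tail after position t contributes at most half of that digit.\<close>
lemma ternary_lower_bound:
  fixes d :: "nat \<Rightarrow> real"
  assumes bounded: "\<And>s. \<bar>d s\<bar> \<le> 1" and zero: "\<And>s. s < t \<Longrightarrow> d s = 0" and one: "\<bar>d t\<bar> = 1"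
  shows "\<bar>\<Sum>s. d s / 3 ^ s\<bar> \<ge> 1 / (2 * 3 ^ t)"
proof -
  have split: "(\<Sum>s. d s / 3 ^ s) = (\<Sum>s. d (s + Suc t) / 3 ^ (s + Suc t)) + d t / 3 ^ t"
    using suminf_split_initial_segment[OF ternary_summable[OF bounded], where k="Suc t"] zero
    by (simp add: lessThan_Suc)
  have "(\<lambda>s. (1 / 3 ^ Suc t) * (1 / 3 ^ s) :: real) sums ((1 / 3 ^ Suc t) * (3/2))"
    by (rule sums_mult[OF third_powers_sums])
  then have tail_sums: "(\<lambda>s. 1 / 3 ^ (s + Suc t) :: real) sums (1 / (2 * 3 ^ t))"
    by (simp add: power_add field_simps)
  have tail: "\<bar>\<Sum>s. d (s + Suc t) / 3 ^ (s + Suc t)\<bar> \<le> 1 / (2 * 3 ^ t)"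
    using norm_suminf_le[of "\<lambda>s. d (s + Suc t) / 3 ^ (s + Suc t)" "\<lambda>s. 1 / 3 ^ (s + Suc t)"]
      sums_summable[OF tail_sums] sums_unique[OF tail_sums] bounded
    by (auto simp: abs_divide divide_right_mono)
  have "\<bar>d t / 3 ^ t\<bar> = 2 * (1 / (2 * 3 ^ t))" using one by (simp add: abs_divide)
  then show ?thesis using split tail by linarith
qed

lemma ternary_digits_agree:
  fixes b c :: "nat \<Rightarrow> real"
  assumes b01: "\<And>s. b s = 0 \<or> b s = 1" and c01: "\<And>s. c s = 0 \<or> c s = 1"
    and close: "\<bar>(\<Sum>s. b s / 3 ^ s) - (\<Sum>s. c s / 3 ^ s)\<bar> < 1 / (2 * 3 ^ T)"
    and "t \<le> T"
  shows "b t = c t"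
proof (rule ccontr)
  assume differ: "b t \<noteq> c t"
  define t0 where "t0 = (LEAST s. b s \<noteq> c s)"
  have t0: "b t0 \<noteq> c t0" "t0 \<le> t" "\<And>s. s < t0 \<Longrightarrow> b s = c s"
    using LeastI[where P="\<lambda>s. b s \<noteq> c s", OF differ]
      Least_le[where P="\<lambda>s. b s \<noteq> c s", OF differ] not_less_Least[where P="\<lambda>s. b s \<noteq> c s"]
    unfolding t0_def by blast+
  have bs: "\<bar>b s\<bar> \<le> 1" "\<bar>c s\<bar> \<le> 1" for s using b01[of s] c01[of s] by auto
  have "(\<Sum>s. b s / 3 ^ s) - (\<Sum>s. c s / 3 ^ s) = (\<Sum>s. (b s - c s) / 3 ^ s)"
    using suminf_diff[OF ternary_summable[OF bs(1)] ternary_summable[OF bs(2)]]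
    by (simp add: diff_divide_distrib)
  moreover have "\<bar>\<Sum>s. (b s - c s) / 3 ^ s\<bar> \<ge> 1 / (2 * 3 ^ t0)"
  proof (rule ternary_lower_bound)
    show "\<bar>b s - c s\<bar> \<le> 1" for s using b01[of s] c01[of s] by auto
    show "\<bar>b t0 - c t0\<bar> = 1" using b01[of t0] c01[of t0] t0(1) by auto
  qed (use t0(3) in simp)
  moreover have "1 / (2 * 3 ^ T) \<le> 1 / (2 * (3::real) ^ t0)"
    using t0(2) \<open>t \<le> T\<close> by (intro divide_left_mono mult_left_mono power_increasing) auto
  ultimately show False using close by linarith
qed

text \<open>A real coding G of Z is uniformly decodable if points of Z with close codes are close.
  G itself need not be continuous; only the decoding is.\<close>
definition uniformly_decodable :: "'b::metric_space set \<Rightarrow> ('b \<Rightarrow> real) \<Rightarrow> bool" where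
  "uniformly_decodable Z G \<longleftrightarrow>
     (\<forall>e>0. \<exists>d>0. \<forall>z\<in>Z. \<forall>z'\<in>Z. \<bar>G z - G z'\<bar> < d \<longrightarrow> dist z z' < e)"

text \<open>Every compact metric space has a bounded, uniformly decodable real coding: enumerate
  the centres of finite 1/(l+1)-nets and record, as ternary digits, which of these balls
  contain the point.\<close>
lemma compact_real_coding:
  fixes Z :: "'b::metric_space set"
  assumes cZ: "compact Z"
  obtains G :: "'b \<Rightarrow> real" where "\<And>z. \<bar>G z\<bar> \<le> 2" "uniformly_decodable Z G"
proof -
  have "\<forall>l::nat. \<exists>k. finite k \<and> k \<subseteq> Z \<and> Z \<subseteq> (\<Union>x\<in>k. ball x (1 / (real l + 1)))"
    using seq_compact_imp_totally_bounded[OF compact_imp_seq_compact[OF cZ]] by simp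
  then obtain P where P: "\<And>l. finite (P l)" "\<And>l. Z \<subseteq> (\<Union>x\<in>P l. ball x (1 / (real l + 1)))"
    by metis
  define A where "A = (\<Union>l. (\<lambda>p. (p, l)) ` P l)"
  have cA: "countable A" unfolding A_def using P(1) by (intro countable_UN) (auto intro: countable_finite)
  define en where "en t = from_nat_into A t" for t
  define bit where
    "bit t z = (if dist z (fst (en t)) < 1 / (real (snd (en t)) + 1) then 1 else 0 :: real)" for t z
  define G where "G z = (\<Sum>t. bit t z / 3 ^ t)" for z
  have bit01: "bit t z = 0 \<or> bit t z = 1" for t z unfolding bit_def by auto
  have sm: "summable (\<lambda>t. bit t z / 3 ^ t)" for z
    by (rule ternary_summable) (simp add: bit_def)
  have "0 \<le> G z" for z unfolding G_def by (rule suminf_nonneg[OF sm]) (auto simp: bit_def)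
  moreover have "G z \<le> 2" for z
  proof -
    have "G z \<le> (\<Sum>t. 1 / 3 ^ t)" unfolding G_def
      by (rule suminf_le[OF _ sm sums_summable[OF third_powers_sums]])
        (auto simp: bit_def divide_right_mono)
    then show ?thesis using sums_unique[OF third_powers_sums] by simp
  qed
  moreover have "uniformly_decodable Z G" unfolding uniformly_decodable_def
  proof (intro allI impI)
    fix e :: real assume "e > 0"
    obtain l :: nat where "2 / e < real l" using reals_Archimedean2 by blast
    then have le: "2 / (real l + 1) < e" using \<open>e > 0\<close> by (simp add: field_simps)
    define Tmax where "Tmax = Max (to_nat_on A ` (\<lambda>p. (p, l)) ` P l)"
    show "\<exists>d>0. \<forall>z\<in>Z. \<forall>z'\<in>Z. \<bar>G z - G z'\<bar> < d \<longrightarrow> dist z z' < e"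
    proof (intro exI[of _ "1 / (2 * 3 ^ Tmax)"] conjI ballI impI)
      fix z z' assume z: "z \<in> Z" and z': "z' \<in> Z" and close: "\<bar>G z - G z'\<bar> < 1 / (2 * 3 ^ Tmax)"
      obtain p where p: "p \<in> P l" "z \<in> ball p (1 / (real l + 1))" using P(2) z by blast
      define t where "t = to_nat_on A (p, l)"
      have ent: "en t = (p, l)"
        unfolding en_def t_def by (rule from_nat_into_to_nat_on[OF cA]) (use p in \<open>auto simp: A_def\<close>)
      have "t \<le> Tmax" unfolding Tmax_def t_def using P(1) p by (intro Max_ge) auto
      then have "bit t z' = bit t z"
        using ternary_digits_agree[of "\<lambda>s. bit s z'" "\<lambda>s. bit s z" Tmax t] bit01 close
        unfolding G_def by (simp add: abs_minus_commute)
      moreover have "bit t z = 1" unfolding bit_def ent using p by (simp add: dist_commute)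
      ultimately have "dist z' p < 1 / (real l + 1)" unfolding bit_def ent by (auto split: if_splits)
      then have "dist z z' < 2 / (real l + 1)"
        using p dist_triangle[of z z' p] by (simp add: dist_commute)
      then show "dist z z' < e" using le by simp
    qed simp
  qed
  ultimately show ?thesis using that[of G] by force
qed

definition decodes :: "'b::metric_space set \<Rightarrow> ('b \<Rightarrow> real) \<Rightarrow> real \<Rightarrow> 'b \<Rightarrow> bool" where
  "decodes Z G r z \<longleftrightarrow> z \<in> Z \<and> (\<forall>e>0. \<exists>\<delta>>0. \<forall>z'\<in>Z. \<bar>G z' - r\<bar> < \<delta> \<longrightarrow> dist z' z \<le> e)"

lemma closure_codes_approachable:
  fixes G :: "'b \<Rightarrow> real"
  assumes "r \<in> closure (G ` Z)" and "\<epsilon> > 0"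
  obtains z where "z \<in> Z" "\<bar>G z - r\<bar> < \<epsilon>"
proof -
  obtain y where "y \<in> G ` Z" "dist y r < \<epsilon>" using assms unfolding closure_approachable by blast
  then show ?thesis using that by (auto simp: dist_real_def)
qed

lemma decodes_code:
  assumes "uniformly_decodable Z G" and "z \<in> Z"
  shows "decodes Z G (G z) z"
  unfolding decodes_def
proof (intro conjI allI impI \<open>z \<in> Z\<close>)
  fix e :: real assume "e > 0"
  then obtain d where "d > 0" "\<forall>z\<in>Z. \<forall>z'\<in>Z. \<bar>G z - G z'\<bar> < d \<longrightarrow> dist z z' < e"
    using assms(1) unfolding uniformly_decodable_def by blast
  then show "\<exists>\<delta>>0. \<forall>z'\<in>Z. \<bar>G z' - G z\<bar> < \<delta> \<longrightarrow> dist z' z \<le> e"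
    using \<open>z \<in> Z\<close> by (meson less_imp_le)
qed

text \<open>Every limit of codes is decoded by some point: codes converging to r come from a
  Cauchy sequence, whose limit exists by compactness.\<close>
lemma decodes_exists:
  assumes cZ: "compact Z" and uc: "uniformly_decodable Z G" and r: "r \<in> closure (G ` Z)"
  shows "\<exists>z. decodes Z G r z"
proof -
  obtain xs where xs: "\<And>n. xs n \<in> G ` Z" "xs \<longlonglongrightarrow> r"
    using r unfolding closure_sequential by blast
  then have "\<forall>n. \<exists>z. z \<in> Z \<and> G z = xs n" by (metis imageE)
  from choice[OF this] obtain zs where "\<forall>n. zs n \<in> Z \<and> G (zs n) = xs n" by blast
  then have zs: "\<And>n. zs n \<in> Z" "(\<lambda>n. G (zs n)) \<longlonglongrightarrow> r" using xs(2) by simp_all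
  have uc': "\<exists>d>0. \<forall>z\<in>Z. \<forall>z'\<in>Z. \<bar>G z - G z'\<bar> < d \<longrightarrow> dist z z' < e" if "e > 0" for e
    using uc that unfolding uniformly_decodable_def by blast
  have "Cauchy zs"
  proof (rule metric_CauchyI)
    fix e :: real assume "e > 0"
    then obtain d where d: "d > 0" "\<forall>z\<in>Z. \<forall>z'\<in>Z. \<bar>G z - G z'\<bar> < d \<longrightarrow> dist z z' < e"
      using uc' by blast
    obtain M where "\<forall>m\<ge>M. \<forall>n\<ge>M. dist (G (zs m)) (G (zs n)) < d"
      using metric_CauchyD[OF LIMSEQ_imp_Cauchy[OF zs(2)] d(1)] by blast
    then show "\<exists>M. \<forall>m\<ge>M. \<forall>n\<ge>M. dist (zs m) (zs n) < e"
      using d(2) zs(1) unfolding dist_real_def by blast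
  qed
  then obtain z where z: "z \<in> Z" "zs \<longlonglongrightarrow> z"
    using compact_imp_complete[OF cZ] zs(1) unfolding complete_def by blast
  have "decodes Z G r z" unfolding decodes_def
  proof (intro conjI z(1) allI impI)
    fix e :: real assume e: "e > 0"
    then obtain d where d: "d > 0" "\<forall>z\<in>Z. \<forall>z'\<in>Z. \<bar>G z - G z'\<bar> < d \<longrightarrow> dist z z' < e/2"
      using uc'[of "e/2"] by auto
    have "eventually (\<lambda>n. dist (G (zs n)) r < d/2 \<and> dist (zs n) z < e/2) sequentially"
      using zs(2) z(2) d(1) e by (intro eventually_conj tendstoD) auto
    then obtain n where n: "\<bar>G (zs n) - r\<bar> < d/2" "dist (zs n) z < e/2"
      by (auto simp: eventually_sequentially dist_real_def)
    show "\<exists>\<delta>>0. \<forall>z'\<in>Z. \<bar>G z' - r\<bar> < \<delta> \<longrightarrow> dist z' z \<le> e"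
    proof (intro exI[of _ "d/2"] conjI ballI impI)
      fix z' assume z': "z' \<in> Z" "\<bar>G z' - r\<bar> < d/2"
      then have "\<bar>G z' - G (zs n)\<bar> < d" using n(1) by linarith
      then have "dist z' (zs n) < e/2" using d(2) z'(1) zs(1) by blast
      then show "dist z' z \<le> e" using n(2) dist_triangle[of z' z "zs n"] by linarith
    qed (use d in simp)
  qed
  then show ?thesis by blast
qed

lemma decodes_unique:
  assumes r: "r \<in> closure (G ` Z)" and z1: "decodes Z G r z1" and z2: "decodes Z G r z2"
  shows "z1 = z2"
proof -
  have "dist z1 z2 \<le> 2 * e" if e: "e > 0" for e
  proof -
    obtain d1 where d1: "d1 > 0" "\<forall>z'\<in>Z. \<bar>G z' - r\<bar> < d1 \<longrightarrow> dist z' z1 \<le> e"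
      using z1 e unfolding decodes_def by blast
    obtain d2 where d2: "d2 > 0" "\<forall>z'\<in>Z. \<bar>G z' - r\<bar> < d2 \<longrightarrow> dist z' z2 \<le> e"
      using z2 e unfolding decodes_def by blast
    obtain z' where z': "z' \<in> Z" "\<bar>G z' - r\<bar> < min d1 d2"
      using closure_codes_approachable[OF r, of "min d1 d2"] d1(1) d2(1) by auto
    then have "dist z' z1 \<le> e" "dist z' z2 \<le> e" using d1 d2 by auto
    then show ?thesis using dist_triangle[of z1 z2 z'] dist_commute[of z' z1] by linarith
  qed
  from this[of "dist z1 z2 / 4"] show ?thesis by (cases "z1 = z2") auto
qed

lemma decoding_map:
  fixes Z :: "'b::metric_space set" and G :: "'b \<Rightarrow> real"
  assumes cZ: "compact Z" and uc: "uniformly_decodable Z G"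
  obtains \<psi> where "continuous_on (closure (G ` Z)) \<psi>" "\<psi> ` closure (G ` Z) \<subseteq> Z"
    "\<And>z. z \<in> Z \<Longrightarrow> \<psi> (G z) = z"
proof -
  define K where "K = closure (G ` Z)"
  define \<psi> where "\<psi> r = (SOME z. decodes Z G r z)" for r
  have \<psi>: "decodes Z G r (\<psi> r)" if "r \<in> K" for r
    using decodes_exists[OF cZ uc that[unfolded K_def]] unfolding \<psi>_def by (rule someI_ex)
  have into: "\<psi> ` closure (G ` Z) \<subseteq> Z" using \<psi> unfolding K_def decodes_def by auto
  have inverse: "\<psi> (G z) = z" if z: "z \<in> Z" for z
  proof -
    have GK: "G z \<in> K" unfolding K_def by (rule closure_subset[THEN subsetD, OF imageI[OF z]])
    show ?thesis by (rule decodes_unique[OF GK[unfolded K_def] \<psi>[OF GK] decodes_code[OF uc z]])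
  qed
  have "continuous_on (closure (G ` Z)) \<psi>"
    unfolding K_def[symmetric] continuous_on_iff
  proof (intro ballI allI impI)
    fix r e assume r: "r \<in> K" and e: "(0::real) < e"
    then have e3: "e/3 > 0" by simp
    obtain d where d: "d > 0" "\<forall>z'\<in>Z. \<bar>G z' - r\<bar> < d \<longrightarrow> dist z' (\<psi> r) \<le> e/3"
      using \<psi>[OF r] e3 unfolding decodes_def by blast
    show "\<exists>d>0. \<forall>r'\<in>K. dist r' r < d \<longrightarrow> dist (\<psi> r') (\<psi> r) < e"
    proof (intro exI[of _ "d/2"] conjI ballI impI)
      fix r' assume r': "r' \<in> K" "dist r' r < d/2"
      obtain d' where d': "d' > 0" "\<forall>z'\<in>Z. \<bar>G z' - r'\<bar> < d' \<longrightarrow> dist z' (\<psi> r') \<le> e/3"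
        using \<psi>[OF r'(1)] e3 unfolding decodes_def by blast
      obtain z' where z': "z' \<in> Z" "\<bar>G z' - r'\<bar> < min d' (d/2)"
        using closure_codes_approachable[OF r'(1)[unfolded K_def], of "min d' (d/2)"] d d' by auto
      have "\<bar>G z' - r'\<bar> < d/2" "\<bar>r' - r\<bar> < d/2" using z'(2) r'(2) by (simp_all add: dist_real_def)
      then have "\<bar>G z' - r\<bar> < d" by linarith
      then have "dist z' (\<psi> r) \<le> e/3" using d z' by blast
      moreover have "dist z' (\<psi> r') \<le> e/3" using d' z' by auto
      ultimately show "dist (\<psi> r') (\<psi> r) < e"
        using dist_triangle[of "\<psi> r'" "\<psi> r" z'] dist_commute[of z' "\<psi> r'"] e by linarith
    qed (use d in simp)
  qed
  then show ?thesis using into inverse by (rule that)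
qed

definition window_avg :: "(nat \<Rightarrow> nat) \<Rightarrow> (nat \<Rightarrow> nat) \<Rightarrow> nat \<Rightarrow> (nat \<Rightarrow> real) \<Rightarrow> real" where
  "window_avg a n k f = (\<Sum>m\<in>{a k..<a k + n k}. f m) / real (n k)"

lemma window_avg_const: "0 < n k \<Longrightarrow> window_avg a n k (\<lambda>_. c) = c"
  unfolding window_avg_def by simp

lemma window_distributions_subconverge:
  fixes u :: "nat \<Rightarrow> real" and a n :: "nat \<Rightarrow> nat"
  assumes bnd: "\<And>m. \<bar>u m\<bar> \<le> B" and npos: "\<And>k. 0 < n k"
  obtains r \<nu> where "strict_mono r" "real_distribution \<nu>"
    "\<And>h C. continuous_on UNIV h \<Longrightarrow> (\<And>x. \<bar>h x\<bar> \<le> C) \<Longrightarrow>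
       (\<lambda>k. window_avg a n (r k) (\<lambda>m. h (u m))) \<longlonglongrightarrow> (\<integral>x. h x \<partial>\<nu>)"
proof -
  define I where "I k = {a k..<a k + n k}" for k
  have If: "finite (I k)" and Ine: "I k \<noteq> {}" and Icard: "card (I k) = n k" for k
    unfolding I_def using npos[of k] by auto
  define \<nu> where "\<nu> k = distr (measure_pmf (pmf_of_set (I k))) borel u" for k
  have \<nu>rd: "real_distribution (\<nu> k)" for k
    unfolding \<nu>_def real_distribution_def real_distribution_axioms_def
    by (auto intro!: prob_space.prob_space_distr prob_space_measure_pmf)
  have \<nu>int: "(\<integral>x. h x \<partial>\<nu> k) = window_avg a n k (\<lambda>m. h (u m))"
    if "h \<in> borel_measurable borel" for h k
  proof -
    have "(\<integral>x. h x \<partial>\<nu> k) = (\<integral>m. h (u m) \<partial>measure_pmf (pmf_of_set (I k)))"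
      unfolding \<nu>_def by (rule integral_distr) (simp_all add: that)
    also have "\<dots> = window_avg a n k (\<lambda>m. h (u m))"
      unfolding window_avg_def I_def[symmetric] using integral_pmf_of_set[OF Ine If] Icard by simp
    finally show ?thesis .
  qed
  have B0: "0 \<le> B" using bnd[of 0] by linarith
  have "tight \<nu>" unfolding tight_def
  proof (intro conjI allI impI \<nu>rd)
    fix e :: real assume "e > 0"
    have "measure (\<nu> k) {-B-1<..B+1} = 1" for k
    proof -
      have "-B-1 < u m \<and> u m \<le> B+1" for m using bnd[of m] by linarith
      then have "u -` {-B-1<..B+1} \<inter> UNIV = UNIV" by auto
      then show ?thesis unfolding \<nu>_def by (subst measure_distr) auto
    qed
    then show "\<exists>a b. a < b \<and> (\<forall>k. 1 - e < measure (\<nu> k) {a<..b})"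
      using \<open>e > 0\<close> B0 by (intro exI[of _ "-B-1"] exI[of _ "B+1"]) auto
  qed
  then obtain r \<nu>0 where r: "strict_mono r" and \<nu>0: "real_distribution \<nu>0"
    and wc: "weak_conv_m (\<nu> \<circ> id \<circ> r) \<nu>0"
    using tight_imp_convergent_subsubsequence[of \<nu> id] by (auto simp: strict_mono_def)
  have conv: "(\<lambda>k. window_avg a n (r k) (\<lambda>m. h (u m))) \<longlonglongrightarrow> (\<integral>x. h x \<partial>\<nu>0)"
    if hc: "continuous_on UNIV h" and hB: "\<And>x. \<bar>h x\<bar> \<le> C" for h C
  proof -
    have "(\<lambda>k. integral\<^sup>L ((\<nu> \<circ> id \<circ> r) k) h) \<longlonglongrightarrow> integral\<^sup>L \<nu>0 h"
      by (rule weak_conv_imp_integral_bdd_continuous_conv[OF _ \<nu>0 wc, of h C])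
         (use \<nu>rd hc hB in \<open>auto simp: continuous_on_eq_continuous_at\<close>)
    moreover have "integral\<^sup>L ((\<nu> \<circ> id \<circ> r) k) h = window_avg a n (r k) (\<lambda>m. h (u m))" for k
      using \<nu>int[of h "r k"] hc by (simp add: borel_measurable_continuous_onI)
    ultimately show ?thesis by simp
  qed
  show ?thesis by (rule that[OF r \<nu>0 conv])
qed

text \<open>A weak limit of window averages of a sequence lying in a closed set K is concentrated
  on K (test against the cut-off functions of K).\<close>
lemma window_limit_concentrated:
  fixes u :: "nat \<Rightarrow> real" and \<nu> :: "real measure"
  assumes \<nu>: "real_distribution \<nu>" and Kc: "closed K" and uK: "\<And>m. u m \<in> K"
    and npos: "\<And>k. 0 < n k"
    and conv: "\<And>h C. continuous_on UNIV h \<Longrightarrow> (\<And>x. \<bar>h x\<bar> \<le> C) \<Longrightarrow>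
       (\<lambda>k. window_avg a n (r k) (\<lambda>m. h (u m))) \<longlonglongrightarrow> (\<integral>x. h x \<partial>\<nu>)"
  shows "measure \<nu> K = 1"
proof -
  interpret \<nu>: real_distribution \<nu> by fact
  have Kne: "K \<noteq> {}" using uK by blast
  have "(\<integral>x. max 0 (1 - real j * infdist x K) \<partial>\<nu>) = 1" for j
  proof -
    have "(\<lambda>k. window_avg a n (r k) (\<lambda>m. max 0 (1 - real j * infdist (u m) K))) \<longlonglongrightarrow>
            (\<integral>x. max 0 (1 - real j * infdist x K) \<partial>\<nu>)"
      by (rule conv[of _ 1]) (auto intro!: continuous_intros simp: infdist_nonneg)
    moreover have "max 0 (1 - real j * infdist (u m) K) = 1" for m
      using infdist_zero[OF uK[of m]] by simp
    ultimately have "(\<lambda>k. 1::real) \<longlonglongrightarrow> (\<integral>x. max 0 (1 - real j * infdist x K) \<partial>\<nu>)"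
      using window_avg_const[where n=n, OF npos] by simp
    then show ?thesis using LIMSEQ_unique[OF tendsto_const] by metis
  qed
  moreover have "(\<lambda>x. infdist x K) \<in> borel_measurable borel"
    by (intro borel_measurable_continuous_onI continuous_intros)
  then have "(\<lambda>j. \<integral>x. max 0 (1 - real j * infdist x K) \<partial>\<nu>) \<longlonglongrightarrow> measure \<nu> K"
    using Kc by (intro cutoff_integral_tendsto_measure[OF \<nu>.finite_measure_axioms _ Kc Kne]) simp_all
  ultimately show ?thesis using LIMSEQ_unique[OF tendsto_const] by fastforce
qed

lemma pushforward_concentrated:
  fixes \<nu> :: "real measure" and \<psi> :: "real \<Rightarrow> 'b::metric_space"
  assumes \<nu>: "real_distribution \<nu>" and \<nu>K: "measure \<nu> K = 1" and Kc: "closed K"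
    and \<psi>c: "continuous_on K \<psi>" and \<psi>K: "\<psi> ` K \<subseteq> Z" and z0: "z0 \<in> Z"
  obtains \<mu> where "prob_space \<mu>" "sets \<mu> = sets (restrict_space borel Z)"
    "\<And>f h. continuous_on Z (f :: 'b \<Rightarrow> real) \<Longrightarrow> continuous_on UNIV h \<Longrightarrow> (\<And>x. x \<in> K \<Longrightarrow> h x = f (\<psi> x)) \<Longrightarrow>
       (\<integral>x. h x \<partial>\<nu>) = (\<integral>z. f z \<partial>\<mu>)"
proof -
  interpret \<nu>: real_distribution \<nu> by (rule \<nu>)
  define \<psi>' where "\<psi>' x = (if x \<in> K then \<psi> x else z0)" for x
  have \<psi>'m: "\<psi>' \<in> measurable \<nu> (restrict_space borel Z)"
    unfolding measurable_cong_sets[OF \<nu>.events_eq_borel refl]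
  proof (rule measurable_restrict_space2)
    show "\<psi>' \<in> space borel \<rightarrow> Z" using \<psi>K z0 by (auto simp: \<psi>'_def image_subset_iff)
    show "\<psi>' \<in> borel_measurable borel" unfolding \<psi>'_def
      by (rule borel_measurable_continuous_on_if) (use Kc \<psi>c in auto)
  qed
  define \<mu> where "\<mu> = distr \<nu> (restrict_space borel Z) \<psi>'"
  have \<mu>: "prob_space \<mu>" unfolding \<mu>_def by (rule \<nu>.prob_space_distr[OF \<psi>'m])
  have s\<mu>: "sets \<mu> = sets (restrict_space borel Z)" unfolding \<mu>_def by simp
  have "(\<integral>x. h x \<partial>\<nu>) = (\<integral>z. f z \<partial>\<mu>)"
    if fc: "continuous_on Z f" and hc: "continuous_on UNIV h" and hK: "\<And>x. x \<in> K \<Longrightarrow> h x = f (\<psi> x)"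
    for f :: "'b \<Rightarrow> real" and h
  proof -
    have fm: "f \<in> borel_measurable (restrict_space borel Z)"
      by (rule borel_measurable_continuous_on_restrict[OF fc])
    have "AE x in \<nu>. x \<in> K" by (rule \<nu>.AE_prob_1[OF \<nu>K])
    moreover have "(\<lambda>x. f (\<psi>' x)) \<in> borel_measurable \<nu>"
      using measurable_comp[OF \<psi>'m fm] by (simp add: comp_def)
    ultimately have "(\<integral>x. h x \<partial>\<nu>) = (\<integral>x. f (\<psi>' x) \<partial>\<nu>)"
      by (intro integral_cong_AE) (auto simp: hK \<psi>'_def hc borel_measurable_continuous_onI)
    also have "\<dots> = (\<integral>z. f z \<partial>\<mu>)"
      unfolding \<mu>_def by (rule integral_distr[OF \<psi>'m fm, symmetric])
    finally show ?thesis .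
  qed
  then show ?thesis by (rule that[OF \<mu> s\<mu>])
qed

text \<open>The proof codes
  Z into the reals, applies Helly selection there and decodes the limit; continuous functions
  on Z are transported to the reals by the Tietze extension theorem.\<close>
lemma window_averages_subconverge:
  fixes Z :: "'b::metric_space set" and w :: "nat \<Rightarrow> 'b" and a n :: "nat \<Rightarrow> nat"
  assumes cZ: "compact Z" and wZ: "\<And>m. w m \<in> Z" and npos: "\<And>k. 0 < n k"
  obtains r \<mu> where "strict_mono r" "prob_space \<mu>" "sets \<mu> = sets (restrict_space borel Z)"
    "\<And>f. continuous_on Z f \<Longrightarrow> (\<lambda>k. window_avg a n (r k) (\<lambda>m. f (w m))) \<longlonglongrightarrow> (\<integral>z. f z \<partial>\<mu>)"
proof -
  obtain G :: "'b \<Rightarrow> real" where G2: "\<And>z. \<bar>G z\<bar> \<le> 2" and Gdec: "uniformly_decodable Z G"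
    using compact_real_coding[OF cZ] by metis
  define K where "K = closure (G ` Z)"
  obtain \<psi> where \<psi>c: "continuous_on K \<psi>" and \<psi>K: "\<psi> ` K \<subseteq> Z"
    and \<psi>G: "\<And>z. z \<in> Z \<Longrightarrow> \<psi> (G z) = z"
    using decoding_map[OF cZ Gdec] unfolding K_def by metis
  have Kc: "closed K" unfolding K_def by simp
  have GK: "G (w m) \<in> K" for m unfolding K_def by (rule closure_subset[THEN subsetD, OF imageI[OF wZ]])
  obtain r \<nu> where r: "strict_mono r" and \<nu>: "real_distribution \<nu>"
    and conv: "\<And>h C. continuous_on UNIV h \<Longrightarrow> (\<And>x. \<bar>h x\<bar> \<le> C) \<Longrightarrow>
       (\<lambda>k. window_avg a n (r k) (\<lambda>m. h (G (w m)))) \<longlonglongrightarrow> (\<integral>x. h x \<partial>\<nu>)"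
    using window_distributions_subconverge[of "\<lambda>m. G (w m)" 2 n a, OF G2 npos] by metis
  have \<nu>K: "measure \<nu> K = 1" by (rule window_limit_concentrated[OF \<nu> Kc GK npos conv])
  obtain \<mu> where \<mu>: "prob_space \<mu>" and s\<mu>: "sets \<mu> = sets (restrict_space borel Z)"
    and push: "\<And>f h. continuous_on Z (f :: 'b \<Rightarrow> real) \<Longrightarrow> continuous_on UNIV h \<Longrightarrow> (\<And>x. x \<in> K \<Longrightarrow> h x = f (\<psi> x)) \<Longrightarrow>
       (\<integral>x. h x \<partial>\<nu>) = (\<integral>z. f z \<partial>\<mu>)"
    using pushforward_concentrated[OF \<nu> \<nu>K Kc \<psi>c \<psi>K wZ] by metis
  have "(\<lambda>k. window_avg a n (r k) (\<lambda>m. f (w m))) \<longlonglongrightarrow> (\<integral>z. f z \<partial>\<mu>)"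
    if fc: "continuous_on Z f" for f :: "'b \<Rightarrow> real"
  proof -
    obtain B where B: "\<And>z. z \<in> Z \<Longrightarrow> \<bar>f z\<bar> \<le> B"
      using compact_imp_bounded[OF compact_continuous_image[OF fc cZ]] unfolding bounded_iff by auto
    have B0: "0 \<le> B" using B[OF wZ[of 0]] by linarith
    have gc: "continuous_on K (f \<circ> \<psi>)"
      by (rule continuous_on_compose[OF \<psi>c continuous_on_subset[OF fc \<psi>K]])
    obtain h where hc: "continuous_on UNIV h" and hK: "\<And>x. x \<in> K \<Longrightarrow> h x = f (\<psi> x)"
      and hB: "\<And>x. norm (h x) \<le> B"
      by (rule Tietze[OF gc _ B0]) (use Kc B \<psi>K in auto)
    have "(\<lambda>k. window_avg a n (r k) (\<lambda>m. h (G (w m)))) \<longlonglongrightarrow> (\<integral>x. h x \<partial>\<nu>)"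
      by (rule conv[OF hc]) (use hB in simp)
    moreover have "h (G (w m)) = f (w m)" for m using hK[OF GK] \<psi>G[OF wZ] by simp
    moreover have "(\<integral>x. h x \<partial>\<nu>) = (\<integral>z. f z \<partial>\<mu>)" by (rule push[OF fc hc]) (rule hK)
    ultimately show ?thesis by simp
  qed
  then show ?thesis by (rule that[OF r \<mu> s\<mu>])
qed

text \<open>Along an orbit, shifting the window changes the average of a [0,1]-valued function by at
  most 1/(window length): the sum telescopes.\<close>
lemma window_avg_orbit_shift:
  fixes w :: "nat \<Rightarrow> 'b" and f :: "'b \<Rightarrow> real"
  assumes "\<And>z. 0 \<le> f z \<and> f z \<le> 1" and "0 < n k"
  shows "\<bar>window_avg a n k (\<lambda>m. f (w (Suc m))) - window_avg a n k (\<lambda>m. f (w m))\<bar> \<le> 1 / real (n k)"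
proof -
  have "window_avg a n k (\<lambda>m. f (w (Suc m))) - window_avg a n k (\<lambda>m. f (w m))
          = (\<Sum>m\<in>{a k..<a k + n k}. f (w (Suc m)) - f (w m)) / real (n k)"
    unfolding window_avg_def by (simp add: sum_subtractf diff_divide_distrib)
  also have "(\<Sum>m\<in>{a k..<a k + n k}. f (w (Suc m)) - f (w m)) = f (w (a k + n k)) - f (w (a k))"
    by (rule sum_Suc_diff') simp
  finally have diff: "window_avg a n k (\<lambda>m. f (w (Suc m))) - window_avg a n k (\<lambda>m. f (w m))
                       = (f (w (a k + n k)) - f (w (a k))) / real (n k)" .
  have "\<bar>f (w (a k + n k)) - f (w (a k))\<bar> \<le> 1"
    using assms(1)[of "w (a k + n k)"] assms(1)[of "w (a k)"] by linarith
  then show ?thesis unfolding diff using assms(2) by (simp add: abs_divide divide_right_mono)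
qed

text \<open>A limit of window averages along an orbit of S, over windows of unbounded length, is
  S-invariant: both sides of the invariance equation are limits of averages that differ by
  a telescoping sum, and continuous functions determine the measure.\<close>
lemma window_limit_invariant:
  fixes Z :: "'b::metric_space set" and S :: "'b \<Rightarrow> 'b" and w :: "nat \<Rightarrow> 'b"
  assumes Zc: "closed Z" and Sc: "continuous_on Z S" and SZ: "S ` Z \<subseteq> Z"
    and wS: "\<And>m. S (w m) = w (Suc m)" and long: "\<And>k. Suc k \<le> n k" and r: "strict_mono r"
    and \<mu>: "prob_space \<mu>" and s\<mu>: "sets \<mu> = sets (restrict_space borel Z)"
    and conv: "\<And>f. continuous_on Z f \<Longrightarrow>
                 (\<lambda>k. window_avg a n (r k) (\<lambda>m. f (w m))) \<longlonglongrightarrow> (\<integral>z. f z \<partial>\<mu>)"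
  shows "\<mu> \<in> inv_measures Z S"
proof -
  interpret \<mu>: prob_space \<mu> by fact
  have sp\<mu>: "space \<mu> = Z" using sets_eq_imp_space_eq[OF s\<mu>] by (simp add: space_restrict_space)
  have Sm: "S \<in> measurable (restrict_space borel Z) (restrict_space borel Z)"
    by (rule measurable_restrict_space2)
      (use SZ in \<open>auto simp: space_restrict_space borel_measurable_continuous_on_restrict[OF Sc]\<close>)
  have S\<mu>: "S \<in> measurable \<mu> (restrict_space borel Z)" "S \<in> measurable \<mu> \<mu>"
    using Sm measurable_cong_sets[OF s\<mu> refl] measurable_cong_sets[OF s\<mu> s\<mu>] by blast+
  have "distr \<mu> (restrict_space borel Z) S = \<mu>"
  proof (rule measure_eq_by_continuous[OF Zc])
    show "finite_measure (distr \<mu> (restrict_space borel Z) S)"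
      by (rule prob_space.finite_measure[OF \<mu>.prob_space_distr[OF S\<mu>(1)]])
    fix f :: "'b \<Rightarrow> real" assume fc: "continuous_on UNIV f" and f01: "\<And>z. 0 \<le> f z \<and> f z \<le> 1"
    have fm: "f \<in> borel_measurable (restrict_space borel Z)"
      by (rule measurable_restrict_space1) (rule borel_measurable_continuous_onI[OF fc])
    have lim_shift: "(\<lambda>k. window_avg a n (r k) (\<lambda>m. f (w (Suc m)))) \<longlonglongrightarrow> (\<integral>z. f (S z) \<partial>\<mu>)"
      using conv[of "\<lambda>z. f (S z)"] continuous_on_compose[OF Sc continuous_on_subset[OF fc]]
      by (simp add: comp_def wS)
    have lim: "(\<lambda>k. window_avg a n (r k) (\<lambda>m. f (w m))) \<longlonglongrightarrow> (\<integral>z. f z \<partial>\<mu>)"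
      by (rule conv[OF continuous_on_subset[OF fc subset_UNIV]])
    have "(\<lambda>k. window_avg a n (r k) (\<lambda>m. f (w (Suc m))) - window_avg a n (r k) (\<lambda>m. f (w m)))
            \<longlonglongrightarrow> 0"
    proof (rule Lim_null_comparison[OF always_eventually LIMSEQ_inverse_real_of_nat], intro allI)
      fix k
      have "real (Suc k) \<le> real (n (r k))" using long[of "r k"] seq_suble[OF r, of k] by simp
      then have "1 / real (n (r k)) \<le> inverse (real (Suc k))"
        by (simp add: inverse_eq_divide divide_left_mono)
      then show "norm (window_avg a n (r k) (\<lambda>m. f (w (Suc m))) - window_avg a n (r k) (\<lambda>m. f (w m)))
                   \<le> inverse (real (Suc k))"
        using window_avg_orbit_shift[of f n "r k" a w, OF f01] long[of "r k"]
        by (simp del: of_nat_Suc)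
    qed
    then have "(\<integral>z. f (S z) \<partial>\<mu>) = (\<integral>z. f z \<partial>\<mu>)"
      using LIMSEQ_unique[OF tendsto_diff[OF lim_shift lim]] by fastforce
    then show "(\<integral>z. f z \<partial>distr \<mu> (restrict_space borel Z) S) = (\<integral>z. f z \<partial>\<mu>)"
      using integral_distr[OF S\<mu>(1) fm] by simp
  qed (use s\<mu> \<mu>.finite_measure_axioms in simp_all)
  then have "emeasure \<mu> (S -` A \<inter> Z) = emeasure \<mu> A" if "A \<in> sets \<mu>" for A
    using emeasure_distr[OF S\<mu>(1), of A] that s\<mu> sp\<mu> by simp
  then show ?thesis unfolding inv_measures_def using \<mu> s\<mu> S\<mu>(2) by blast
qed

text \<open>If an orbit visits the closed set F with frequency at least \<delta> in every window, the
  limit measure gives F mass at least \<delta> (test against the cut-off functions of F).\<close>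
lemma window_limit_mass:
  fixes Z F :: "'b::metric_space set" and w :: "nat \<Rightarrow> 'b"
  assumes Zc: "closed Z" and Fc: "closed F" and FZ: "F \<subseteq> Z" and npos: "\<And>k. 0 < n k"
    and freq: "\<And>k. \<delta> * real (n k) \<le> real (card {m \<in> {a k..<a k + n k}. w m \<in> F})"
    and \<mu>: "prob_space \<mu>" and s\<mu>: "sets \<mu> = sets (restrict_space borel Z)"
    and conv: "\<And>f. continuous_on Z f \<Longrightarrow>
                 (\<lambda>k. window_avg a n (r k) (\<lambda>m. f (w m))) \<longlonglongrightarrow> (\<integral>z. f z \<partial>\<mu>)"
  shows "measure \<mu> F \<ge> \<delta>"
proof (cases "\<delta> \<le> 0")
  case False
  interpret \<mu>: prob_space \<mu> by fact
  have Fne: "F \<noteq> {}"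
    using freq[of 0] npos[of 0] False by (auto simp: mult_le_0_iff)
  have FS: "F \<in> sets \<mu>" unfolding s\<mu> by (rule closed_restrict_borel[OF Fc FZ Zc])
  have "(\<lambda>j. \<integral>z. max 0 (1 - real j * infdist z F) \<partial>\<mu>) \<longlonglongrightarrow> measure \<mu> F"
  proof (rule cutoff_integral_tendsto_measure[OF \<mu>.finite_measure_axioms FS Fc Fne])
    show "(\<lambda>z. infdist z F) \<in> borel_measurable \<mu>"
      unfolding measurable_cong_sets[OF s\<mu> refl]
      by (rule measurable_restrict_space1) (intro borel_measurable_continuous_onI continuous_intros)
  qed
  moreover have ge: "(\<integral>z. max 0 (1 - real j * infdist z F) \<partial>\<mu>) \<ge> \<delta>" for j
  proof (rule LIMSEQ_le_const[OF conv])
    show "continuous_on Z (\<lambda>z. max 0 (1 - real j * infdist z F))" by (intro continuous_intros)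
    show "\<exists>N. \<forall>k\<ge>N. \<delta> \<le> window_avg a n (r k) (\<lambda>m. max 0 (1 - real j * infdist (w m) F))"
    proof (intro exI allI impI)
      fix k
      define I where "I = {a (r k)..<a (r k) + n (r k)}"
      have "real (card {m \<in> I. w m \<in> F}) = (\<Sum>m\<in>I. if w m \<in> F then 1 else 0)"
        using sum.inter_filter[of I "\<lambda>_. 1::real" "\<lambda>m. w m \<in> F"] by (simp add: I_def)
      also have "\<dots> \<le> (\<Sum>m\<in>I. max 0 (1 - real j * infdist (w m) F))"
        by (rule sum_mono) (auto simp: infdist_zero)
      finally show "\<delta> \<le> window_avg a n (r k) (\<lambda>m. max 0 (1 - real j * infdist (w m) F))"
        using freq[of "r k"] npos[of "r k"] unfolding window_avg_def I_def
        by (simp add: field_simps)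
    qed
  qed
  ultimately show ?thesis by (intro LIMSEQ_le_const) auto
qed (use measure_nonneg[of \<mu> F] in linarith)

theorem krylov_bogolyubov_windows:
  fixes Z F :: "'b::metric_space set" and S :: "'b \<Rightarrow> 'b" and w :: "nat \<Rightarrow> 'b"
  assumes cZ: "compact Z" and Sc: "continuous_on Z S" and SZ: "S ` Z \<subseteq> Z"
    and wZ: "\<And>m. w m \<in> Z" and wS: "\<And>m. S (w m) = w (Suc m)" and long: "\<And>k. Suc k \<le> n k"
    and Fc: "closed F" and FZ: "F \<subseteq> Z"
    and freq: "\<And>k. \<delta> * real (n k) \<le> real (card {m \<in> {a k..<a k + n k}. w m \<in> F})"
  shows "\<exists>\<mu>\<in>inv_measures Z S. measure \<mu> F \<ge> \<delta>"
proof -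
  have npos: "0 < n k" for k using long[of k] by simp
  have Zc: "closed Z" using cZ by (rule compact_imp_closed)
  show ?thesis
  proof (rule window_averages_subconverge[OF cZ wZ npos])
    fix r \<mu> assume r: "strict_mono r" and \<mu>: "prob_space \<mu>"
      and s\<mu>: "sets \<mu> = sets (restrict_space borel Z)"
      and conv: "\<And>f. continuous_on Z f \<Longrightarrow>
                   (\<lambda>k. window_avg a n (r k) (\<lambda>m. f (w m))) \<longlonglongrightarrow> (\<integral>z. f z \<partial>\<mu>)"
    show ?thesis
      using window_limit_invariant[OF Zc Sc SZ wS long r \<mu> s\<mu> conv]
        window_limit_mass[OF Zc Fc FZ npos freq \<mu> s\<mu> conv] by blast
  qed
qed

lemma funpow_in: "T ` X \<subseteq> X \<Longrightarrow> u \<in> X \<Longrightarrow> (T ^^ m) u \<in> X"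
  by (induction m) auto

lemma continuous_on_funpow:
  fixes T :: "'a::topological_space \<Rightarrow> 'a"
  assumes Tc: "continuous_on X T" and TX: "T ` X \<subseteq> X"
  shows "continuous_on X (T ^^ m)"
proof (induction m)
  case (Suc m)
  have "(T ^^ m) ` X \<subseteq> X" using funpow_in[OF TX] by auto
  then have "continuous_on X (T \<circ> (T ^^ m))"
    using continuous_on_compose[OF Suc continuous_on_subset[OF Tc]] by blast
  then show ?case by simp
qed simp

lemma funpow_map_prod: "(map_prod T T ^^ m) (u, v) = ((T ^^ m) u, (T ^^ m) v)" for T :: "'a \<Rightarrow> 'a"
  by (induction m) auto

definition pair_orbit_closure :: "('a::topological_space \<Rightarrow> 'a) \<Rightarrow> 'a \<Rightarrow> 'a \<Rightarrow> ('a \<times> 'a) set" where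
  "pair_orbit_closure T x y = closure {((T ^^ n) x, (T ^^ n) y) | n. True}"

lemma pair_orbit_closure_subsystem:
  fixes X :: "'a::metric_space set"
  assumes tds: "tds X T" and x: "x \<in> X" and y: "y \<in> X"
  defines "Z \<equiv> pair_orbit_closure T x y"
  shows "compact Z" "Z \<subseteq> X \<times> X" "continuous_on Z (map_prod T T)" "map_prod T T ` Z \<subseteq> Z"
    "((T ^^ m) x, (T ^^ m) y) \<in> Z"
proof -
  have cX: "compact X" and Tc: "continuous_on X T" and TX: "T ` X \<subseteq> X"
    using tds unfolding tds_def by auto
  define Orb where "Orb = {((T ^^ n) x, (T ^^ n) y) | n. True}"
  have ZO: "Z = closure Orb" unfolding Z_def Orb_def pair_orbit_closure_def ..
  have cXX: "compact (X \<times> X)" using compact_Times[OF cX cX] .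
  have "Orb \<subseteq> X \<times> X" unfolding Orb_def using funpow_in[OF TX] x y by auto
  then show ZX: "Z \<subseteq> X \<times> X" unfolding ZO by (rule closure_minimal[OF _ compact_imp_closed[OF cXX]])
  show "compact Z" using compact_Int_closed[OF cXX closed_closure, of Orb] ZX ZO
    by (simp add: Int_absorb1)
  have "continuous_on (X \<times> X) (map_prod T T)"
    unfolding map_prod_def case_prod_beta
    by (intro continuous_on_Pair continuous_on_compose2[OF Tc] continuous_intros) auto
  then show cSZ: "continuous_on Z (map_prod T T)" using ZX by (rule continuous_on_subset)
  have "map_prod T T ` Orb \<subseteq> Orb" unfolding Orb_def by auto (metis funpow.simps(2) o_apply)
  then show "map_prod T T ` Z \<subseteq> Z" unfolding ZO
    using image_closure_subset[OF cSZ[unfolded ZO] closed_closure] closure_subset by blast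
  show "((T ^^ m) x, (T ^^ m) y) \<in> Z" unfolding ZO Orb_def by (rule closure_subset[THEN subsetD]) blast
qed

lemma banach_density_one_transfer:
  assumes A: "banach_density_one A" and shift: "\<And>L. \<exists>q. \<forall>m<L. q + m \<in> A \<longrightarrow> m \<in> B"
  shows "banach_density_one B"
  unfolding banach_density_one_def
proof (intro allI impI)
  fix c :: real assume "c < 1"
  then obtain N where N: "N \<ge> 1" "\<And>a n. n \<ge> N \<Longrightarrow> real (card (A \<inter> {a..<a+n})) \<ge> c * real n"
    using A unfolding banach_density_one_def by blast
  show "\<exists>N\<ge>1. \<forall>a n. n \<ge> N \<longrightarrow> c * real n \<le> real (card (B \<inter> {a..<a+n}))"
  proof (intro exI[of _ N] conjI allI impI N(1))
    fix a n assume n: "n \<ge> N"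
    obtain q where q: "\<And>m. m < a + n \<Longrightarrow> q + m \<in> A \<Longrightarrow> m \<in> B" using shift[of "a + n"] by blast
    have "card (A \<inter> {q + a..<q + a + n}) \<le> card (B \<inter> {a..<a+n})"
    proof (rule card_inj_on_le[where f="\<lambda>t. t - q"])
      show "inj_on (\<lambda>t. t - q) (A \<inter> {q + a..<q + a + n})" by (auto simp: inj_on_def)
      show "(\<lambda>t. t - q) ` (A \<inter> {q + a..<q + a + n}) \<subseteq> B \<inter> {a..<a+n}"
        using q by (force simp: le_add_diff_inverse)
    qed simp
    then show "c * real n \<le> real (card (B \<inter> {a..<a+n}))" using N(2)[OF n, of "q + a"] by linarith
  qed
qed

lemma banach_density_one_initial_frequency:
  assumes A: "banach_density_one A"
  shows "(\<lambda>n. real (card ({..<n} - A)) / real n) \<longlonglongrightarrow> 0"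
proof (rule LIMSEQ_I)
  fix r :: real assume r: "r > 0"
  then have "1 - r/2 < 1" by simp
  then obtain N where N: "N \<ge> 1" "\<And>a n. n \<ge> N \<Longrightarrow> real (card (A \<inter> {a..<a+n})) \<ge> (1 - r/2) * real n"
    using A unfolding banach_density_one_def by blast
  show "\<exists>no. \<forall>n\<ge>no. norm (real (card ({..<n} - A)) / real n - 0) < r"
  proof (intro exI[of _ N] allI impI)
    fix n assume n: "N \<le> n"
    have "card ({..<n} - A) = n - card (A \<inter> {0..<n})"
      by (subst card_Diff_subset_Int) (auto simp: Int_commute atLeast0LessThan)
    moreover have "card (A \<inter> {0..<n}) \<le> n" using card_mono[of "{0..<n}" "A \<inter> {0..<n}"] by simp
    ultimately have "real (card ({..<n} - A)) \<le> r/2 * real n"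
      using N(2)[OF n, of 0] by (simp add: of_nat_diff algebra_simps)
    moreover have npos: "real n > 0" using n N(1) by simp
    ultimately have "real (card ({..<n} - A)) / real n \<le> r/2" by (simp add: divide_le_eq)
    moreover have "0 \<le> real (card ({..<n} - A)) / real n" by simp
    ultimately have "real (card ({..<n} - A)) / real n < r" using r by linarith
    then show "norm (real (card ({..<n} - A)) / real n - 0) < r" by simp
  qed
qed

text \<open>Shadowing: for a point (u, v) of the orbit closure and a horizon L, some orbit point
  ((T^q) x, (T^q) y) follows the orbit of (u, v) \<epsilon>-closely for L steps (continuity of
  the finitely many iterates T^j, j < L).\<close>
lemma pair_orbit_closure_shadowing:
  fixes X :: "'a::metric_space set"
  assumes tds: "tds X T" and x: "x \<in> X" and y: "y \<in> X"
    and uv: "(u, v) \<in> pair_orbit_closure T x y" and e: "e > 0"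
  obtains q where "\<And>j. j < L \<Longrightarrow> dist ((T ^^ (q + j)) x) ((T ^^ j) u) < e"
    "\<And>j. j < L \<Longrightarrow> dist ((T ^^ (q + j)) y) ((T ^^ j) v) < e"
proof -
  have Tc: "continuous_on X T" and TX: "T ` X \<subseteq> X" using tds unfolding tds_def by auto
  have uvX: "u \<in> X" "v \<in> X" using pair_orbit_closure_subsystem(2)[OF tds x y] uv by auto
  obtain s where s: "\<And>i. s i \<in> {((T ^^ n) x, (T ^^ n) y) | n. True}" "s \<longlonglongrightarrow> (u, v)"
    using uv unfolding pair_orbit_closure_def closure_sequential by blast
  then have "\<forall>i. \<exists>k. s i = ((T ^^ k) x, (T ^^ k) y)" by blast
  from choice[OF this] obtain qs where qs: "\<And>i. s i = ((T ^^ qs i) x, (T ^^ qs i) y)" by blast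
  have xs: "(\<lambda>i. (T ^^ qs i) x) \<longlonglongrightarrow> u" and ys: "(\<lambda>i. (T ^^ qs i) y) \<longlonglongrightarrow> v"
    using tendsto_fst[OF s(2)] tendsto_snd[OF s(2)] unfolding qs by simp_all
  have "eventually (\<lambda>i. dist ((T ^^ j) ((T ^^ qs i) x)) ((T ^^ j) u) < e \<and>
                        dist ((T ^^ j) ((T ^^ qs i) y)) ((T ^^ j) v) < e) sequentially" for j
  proof -
    have cj: "continuous_on X (T ^^ j)" by (rule continuous_on_funpow[OF Tc TX])
    show ?thesis
      using continuous_on_tendsto_compose[OF cj xs uvX(1)] continuous_on_tendsto_compose[OF cj ys uvX(2)]
        funpow_in[OF TX x] funpow_in[OF TX y] e
      by (intro eventually_conj tendstoD) auto
  qed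
  then have "eventually (\<lambda>i. \<forall>j\<in>{..<L}. dist ((T ^^ j) ((T ^^ qs i) x)) ((T ^^ j) u) < e \<and>
                        dist ((T ^^ j) ((T ^^ qs i) y)) ((T ^^ j) v) < e) sequentially"
    by (intro eventually_ball_finite) auto
  then obtain i where "\<forall>j<L. dist ((T ^^ j) ((T ^^ qs i) x)) ((T ^^ j) u) < e \<and>
                        dist ((T ^^ j) ((T ^^ qs i) y)) ((T ^^ j) v) < e"
    by (auto simp: eventually_sequentially)
  then show ?thesis using that[of "qs i"] by (simp add: funpow_add add.commute)
qed

text \<open>(1) \<Longrightarrow> (3): Banach proximality passes to the whole orbit closure.  Near-coincidence
  times of (x, y), read along a shadowing orbit segment, give near-coincidence times of
  (u, v).\<close>
lemma banach_proximal_orbit_closure: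
  fixes X :: "'a::metric_space set"
  assumes tds: "tds X T" and x: "x \<in> X" and y: "y \<in> X" and bp: "banach_proximal T x y"
  shows "pair_orbit_closure T x y \<subseteq> BP X T"
proof
  fix p assume p: "p \<in> pair_orbit_closure T x y"
  obtain u v where uv: "p = (u, v)" by fastforce
  have "banach_proximal T u v" unfolding banach_proximal_def
  proof (intro allI impI)
    fix \<epsilon> :: real assume "\<epsilon> > 0"
    then have \<epsilon>2: "\<epsilon>/2 > 0" and \<epsilon>4: "\<epsilon>/4 > 0" by simp_all
    have "banach_density_one {n. dist ((T ^^ n) x) ((T ^^ n) y) < \<epsilon>/2}"
      using bp \<epsilon>2 unfolding banach_proximal_def by blast
    then show "banach_density_one {n. dist ((T ^^ n) u) ((T ^^ n) v) < \<epsilon>}"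
    proof (rule banach_density_one_transfer)
      fix L
      obtain q where
        qx: "\<And>j. j < L \<Longrightarrow> dist ((T ^^ (q + j)) x) ((T ^^ j) u) < \<epsilon>/4" and
        qy: "\<And>j. j < L \<Longrightarrow> dist ((T ^^ (q + j)) y) ((T ^^ j) v) < \<epsilon>/4"
        by (rule pair_orbit_closure_shadowing[OF tds x y p[unfolded uv] \<epsilon>4]) auto
      have "dist ((T ^^ m) u) ((T ^^ m) v) < \<epsilon>"
        if "m < L" "dist ((T ^^ (q + m)) x) ((T ^^ (q + m)) y) < \<epsilon>/2" for m
        using qx[OF that(1)] qy[OF that(1)] that(2)
          dist_triangle[of "(T ^^ m) u" "(T ^^ m) v" "(T ^^ (q + m)) x"]
          dist_triangle[of "(T ^^ (q + m)) x" "(T ^^ m) v" "(T ^^ (q + m)) y"]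
        by (simp add: dist_commute)
      then show "\<exists>q. \<forall>m<L. q + m \<in> {n. dist ((T ^^ n) x) ((T ^^ n) y) < \<epsilon>/2} \<longrightarrow>
                     m \<in> {n. dist ((T ^^ n) u) ((T ^^ n) v) < \<epsilon>}"
        by auto
    qed
  qed
  moreover have "u \<in> X" "v \<in> X" using pair_orbit_closure_subsystem(2)[OF tds x y] p uv by auto
  ultimately show "p \<in> BP X T" unfolding BP_def uv by simp
qed

lemma invariant_measure_iterate_preimage:
  fixes Z A :: "'b::topological_space set" and S :: "'b \<Rightarrow> 'b"
  assumes \<mu>inv: "\<mu> \<in> inv_measures Z S" and AS: "A \<in> sets \<mu>"
  shows "(S ^^ m) -` A \<inter> Z \<in> sets \<mu>" "measure \<mu> ((S ^^ m) -` A \<inter> Z) = measure \<mu> A"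
proof -
  have s\<mu>: "sets \<mu> = sets (restrict_space borel Z)" and S\<mu>: "S \<in> measurable \<mu> \<mu>"
    and inv: "\<And>A. A \<in> sets \<mu> \<Longrightarrow> emeasure \<mu> (S -` A \<inter> Z) = emeasure \<mu> A"
    using \<mu>inv unfolding inv_measures_def by auto
  have sp\<mu>: "space \<mu> = Z" using sets_eq_imp_space_eq[OF s\<mu>] by (simp add: space_restrict_space)
  have Sm: "(S ^^ m) \<in> measurable \<mu> \<mu>" for m
  proof (induction m)
    case (Suc m)
    show ?case using measurable_comp[OF Suc S\<mu>] by (simp add: comp_def)
  qed simp
  show BS: "(S ^^ m) -` A \<inter> Z \<in> sets \<mu>" for m using measurable_sets[OF Sm AS] sp\<mu> by simp
  have AZ: "A \<subseteq> Z" using sets.sets_into_space[OF AS] sp\<mu> by simp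
  show "measure \<mu> ((S ^^ m) -` A \<inter> Z) = measure \<mu> A"
  proof (induction m)
    case (Suc m)
    have "(S ^^ Suc m) -` A \<inter> Z = S -` ((S ^^ m) -` A \<inter> Z) \<inter> Z"
      using measurable_space[OF S\<mu>] sp\<mu> by (auto simp: funpow_Suc_right simp del: funpow.simps)
    then have "emeasure \<mu> ((S ^^ Suc m) -` A \<inter> Z) = emeasure \<mu> ((S ^^ m) -` A \<inter> Z)"
      using inv[OF BS[of m]] by (simp only:)
    then show ?case using Suc unfolding measure_def by (simp only:)
  qed (use AZ in \<open>simp add: Int_absorb2\<close>)
qed

text \<open>An invariant measure gives no mass to a measurable set that every point of Z visits with
  zero asymptotic frequency: the visit frequencies have integral \<mu>(F) by invariance and tend
  to 0 pointwise, hence in integral by dominated convergence.\<close>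
lemma invariant_measure_null_if_rare_visits:
  fixes Z F :: "'b::topological_space set" and S :: "'b \<Rightarrow> 'b"
  assumes \<mu>inv: "\<mu> \<in> inv_measures Z S" and FS: "F \<in> sets \<mu>"
    and rare: "\<And>z. z \<in> Z \<Longrightarrow> (\<lambda>n. real (card {m \<in> {..<n}. (S ^^ m) z \<in> F}) / real n) \<longlonglongrightarrow> 0"
  shows "measure \<mu> F = 0"
proof -
  have \<mu>: "prob_space \<mu>" and s\<mu>: "sets \<mu> = sets (restrict_space borel Z)"
    using \<mu>inv unfolding inv_measures_def by auto
  interpret \<mu>: prob_space \<mu> by (rule \<mu>)
  have sp\<mu>: "space \<mu> = Z" using sets_eq_imp_space_eq[OF s\<mu>] by (simp add: space_restrict_space)
  define B where "B m = (S ^^ m) -` F \<inter> Z" for m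
  have BS: "B m \<in> sets \<mu>" and B\<mu>: "measure \<mu> (B m) = measure \<mu> F" for m
    unfolding B_def using invariant_measure_iterate_preimage[OF \<mu>inv FS] by auto
  define freq where "freq n z = (\<Sum>m<n. indicator (B m) z) / real n" for n z
  have int_freq: "(\<integral>z. freq (Suc n) z \<partial>\<mu>) = measure \<mu> F" for n
  proof -
    have "(\<integral>z. (\<Sum>m<Suc n. indicator (B m) z :: real) \<partial>\<mu>) = (\<Sum>m<Suc n. measure \<mu> (B m))"
      by (subst Bochner_Integration.integral_sum) (auto simp: BS \<mu>.emeasure_eq_measure)
    then show ?thesis unfolding freq_def using B\<mu> by simp
  qed
  have freq_eq: "freq n z = real (card {m \<in> {..<n}. (S ^^ m) z \<in> F}) / real n" if "z \<in> Z" for n z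
  proof -
    have "(\<Sum>m<n. indicator (B m) z :: real) = (\<Sum>m<n. if (S ^^ m) z \<in> F then 1 else 0)"
      unfolding B_def using that by (intro sum.cong) (auto simp: indicator_def)
    also have "\<dots> = real (card {m \<in> {..<n}. (S ^^ m) z \<in> F})"
      using sum.inter_filter[of "{..<n}" "\<lambda>_. 1::real" "\<lambda>m. (S ^^ m) z \<in> F"] by simp
    finally show ?thesis unfolding freq_def by simp
  qed
  have freq_bound: "norm (freq n z) \<le> 1" for n z
  proof -
    have "(\<Sum>m<n. indicator (B m) z :: real) \<le> real n"
      using sum_mono[of "{..<n}" "\<lambda>m. indicator (B m) z :: real" "\<lambda>_. 1"] by (simp add: indicator_def)
    then show ?thesis unfolding freq_def by (cases "n = 0") (auto simp: divide_le_eq sum_nonneg)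
  qed
  have "(\<lambda>n. \<integral>z. freq n z \<partial>\<mu>) \<longlonglongrightarrow> (\<integral>z. 0 \<partial>\<mu>)"
  proof (rule integral_dominated_convergence[where w="\<lambda>_. 1"])
    show "freq n \<in> borel_measurable \<mu>" for n unfolding freq_def using BS by measurable
    show "AE z in \<mu>. (\<lambda>n. freq n z) \<longlonglongrightarrow> 0"
      using freq_eq rare by (intro AE_I2) (simp add: sp\<mu>)
  qed (use freq_bound in auto)
  then have "(\<lambda>n. measure \<mu> F) \<longlonglongrightarrow> 0"
    using LIMSEQ_Suc[of "\<lambda>n. \<integral>z. freq n z \<partial>\<mu>"] by (simp add: int_freq)
  then show ?thesis by (simp add: LIMSEQ_const_iff)
qed

lemma measure_on_diagonal:
  fixes Z :: "('a::metric_space \<times> 'a) set"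
  assumes \<mu>: "prob_space \<mu>" and s\<mu>: "sets \<mu> = sets (restrict_space borel Z)" and Zc: "closed Z"
    and far_null: "\<And>\<epsilon>. \<epsilon> > 0 \<Longrightarrow> measure \<mu> {p \<in> Z. dist (fst p) (snd p) \<ge> \<epsilon>} = 0"
  shows "emeasure \<mu> (Z \<inter> {p. fst p = snd p}) = 1"
proof -
  interpret \<mu>: prob_space \<mu> by (rule \<mu>)
  have sp\<mu>: "space \<mu> = Z" using sets_eq_imp_space_eq[OF s\<mu>] by (simp add: space_restrict_space)
  have closed_sets: "A \<in> sets \<mu>" if "closed A" "A \<subseteq> Z" for A
    unfolding s\<mu> using closed_restrict_borel[OF that Zc] .
  define D where "D = Z \<inter> {p. fst p = snd p}"
  define F where "F j = {p \<in> Z. dist (fst p) (snd p) \<ge> 1 / real (Suc j)}" for j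
  have FS: "F j \<in> sets \<mu>" for j
  proof (rule closed_sets)
    have "F j = Z \<inter> {p. dist (fst p) (snd p) \<ge> 1 / real (Suc j)}" unfolding F_def by auto
    then show "closed (F j)" by (simp add: closed_Int Zc closed_Collect_le continuous_intros)
  qed (auto simp: F_def)
  have "(\<Union>j. F j) \<in> null_sets \<mu>"
    using FS far_null unfolding F_def by (intro null_sets_UN) (auto simp: null_sets_def \<mu>.emeasure_eq_measure)
  moreover have "Z - D = (\<Union>j. F j)"
  proof
    show "Z - D \<subseteq> (\<Union>j. F j)"
    proof
      fix p assume p: "p \<in> Z - D"
      then have "dist (fst p) (snd p) > 0" unfolding D_def by auto
      then obtain j where "1 / real (Suc j) < dist (fst p) (snd p)"
        by (metis reals_Archimedean inverse_eq_divide)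
      then have "p \<in> F j" using p unfolding F_def by auto
      then show "p \<in> (\<Union>j. F j)" by blast
    qed
  qed (auto simp: F_def D_def)
  ultimately have "measure \<mu> (Z - D) = 0" by (simp add: \<mu>.emeasure_eq_measure null_sets_def)
  moreover have "closed D" unfolding D_def by (intro closed_Int Zc closed_Collect_eq continuous_intros)
  then have "D \<in> sets \<mu>" by (rule closed_sets) (simp add: D_def)
  ultimately show ?thesis using \<mu>.prob_compl[of D] sp\<mu> by (simp add: \<mu>.emeasure_eq_measure D_def)
qed

text \<open>(3) \<Longrightarrow> (2): if the whole orbit closure consists of Banach proximal pairs, each set
  {d \<ge> \<epsilon>} is visited with zero frequency by every point, hence is null for every invariant
  measure; so every invariant measure, and therefore the support, lives on the diagonal.\<close>
lemma orbit_closure_BP_imp_supp_diagonal: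
  fixes X :: "'a::metric_space set"
  assumes tds: "tds X T" and x: "x \<in> X" and y: "y \<in> X"
    and ZBP: "pair_orbit_closure T x y \<subseteq> BP X T"
  shows "supp_sys (pair_orbit_closure T x y) (map_prod T T) \<subseteq> {(z, z) | z. z \<in> X}"
proof -
  define Z where "Z = pair_orbit_closure T x y"
  define S where "S = map_prod T T"
  note sub = pair_orbit_closure_subsystem[OF tds x y, folded Z_def S_def]
  have Zc: "closed Z" using sub(1) by (rule compact_imp_closed)
  define D where "D = Z \<inter> {p. fst p = snd p}"
  have "emeasure \<mu> D = 1" if \<mu>inv: "\<mu> \<in> inv_measures Z S" for \<mu>
  proof -
    have \<mu>: "prob_space \<mu>" and s\<mu>: "sets \<mu> = sets (restrict_space borel Z)"
      using \<mu>inv unfolding inv_measures_def by auto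
    show ?thesis unfolding D_def
    proof (rule measure_on_diagonal[OF \<mu> s\<mu> Zc])
      fix \<epsilon> :: real assume \<epsilon>: "\<epsilon> > 0"
      define F where "F = {p \<in> Z. dist (fst p) (snd p) \<ge> \<epsilon>}"
      have "F = Z \<inter> {p. dist (fst p) (snd p) \<ge> \<epsilon>}" unfolding F_def by auto
      then have "closed F" by (simp add: closed_Int Zc closed_Collect_le continuous_intros)
      then have "F \<in> sets \<mu>" unfolding s\<mu> by (rule closed_restrict_borel[OF _ _ Zc]) (simp add: F_def)
      then show "measure \<mu> {p \<in> Z. dist (fst p) (snd p) \<ge> \<epsilon>} = 0"
        unfolding F_def[symmetric]
      proof (rule invariant_measure_null_if_rare_visits[OF \<mu>inv])
        fix z assume z: "z \<in> Z"
        obtain u v where uv: "z = (u, v)" by fastforce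
        have "banach_proximal T u v" using ZBP z unfolding Z_def uv BP_def by auto
        then have "banach_density_one {n. dist ((T ^^ n) u) ((T ^^ n) v) < \<epsilon>}"
          unfolding banach_proximal_def using \<epsilon> by blast
        moreover have "{m \<in> {..<n}. (S ^^ m) z \<in> F} = {..<n} - {n. dist ((T ^^ n) u) ((T ^^ n) v) < \<epsilon>}"
          for n using funpow_in[OF sub(4) z] unfolding F_def S_def uv funpow_map_prod by auto
        ultimately show "(\<lambda>n. real (card {m \<in> {..<n}. (S ^^ m) z \<in> F}) / real n) \<longlonglongrightarrow> 0"
          using banach_density_one_initial_frequency by simp
      qed
    qed
  qed
  moreover have "closed D" unfolding D_def by (intro closed_Int Zc closed_Collect_eq continuous_intros)
  ultimately have "supp_sys Z S \<subseteq> D" unfolding supp_sys_def by (intro Inter_lower) (auto simp: D_def)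
  also have "D \<subseteq> {(z, z) | z. z \<in> X}" unfolding D_def using sub(2) by force
  finally show ?thesis unfolding Z_def S_def .
qed

text \<open>A compact set disjoint from the support has measure zero for every invariant measure:
  it is covered by finitely many complements of closed sets of full invariant measure.\<close>
lemma invariant_measure_null_off_supp:
  fixes Z F :: "'b::topological_space set"
  assumes \<mu>inv: "\<mu> \<in> inv_measures Z S" and cF: "compact F" and FS: "F \<in> sets \<mu>"
    and disj: "F \<inter> supp_sys Z S = {}"
  shows "measure \<mu> F = 0"
proof -
  have \<mu>: "prob_space \<mu>" using \<mu>inv unfolding inv_measures_def by auto
  interpret \<mu>: prob_space \<mu> by (rule \<mu>)
  define \<C> where "\<C> = {C. closed C \<and> C \<subseteq> Z \<and> (\<forall>\<nu>\<in>inv_measures Z S. emeasure \<nu> C = 1)}"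
  have "F \<subseteq> \<Union> (uminus ` \<C>)" using disj unfolding supp_sys_def \<C>_def by blast
  moreover have "\<forall>U\<in>uminus ` \<C>. open U" unfolding \<C>_def by (auto simp: open_Compl)
  ultimately obtain \<C>' where C': "\<C>' \<subseteq> uminus ` \<C>" "finite \<C>'" "F \<subseteq> \<Union>\<C>'"
    using compactE[OF cF] by metis
  have "AE z in \<mu>. z \<notin> U" if "U \<in> \<C>'" for U
  proof -
    obtain C where C: "C \<in> \<C>" "U = - C" using C'(1) \<open>U \<in> \<C>'\<close> by blast
    then have "emeasure \<mu> C = 1" using \<mu>inv unfolding \<C>_def by blast
    then have "measure \<mu> C = 1" by (simp add: \<mu>.emeasure_eq_measure)
    then show ?thesis using \<mu>.AE_prob_1 C(2) by simp
  qed
  then have "AE z in \<mu>. \<forall>U\<in>\<C>'. z \<notin> U" by (subst AE_finite_all[OF C'(2)]) blast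
  then have "AE z in \<mu>. z \<notin> F" by (rule eventually_mono) (use C'(3) in blast)
  then have "F \<in> null_sets \<mu>" using FS AE_iff_null_sets by blast
  then show ?thesis by (simp add: \<mu>.emeasure_eq_measure null_sets_def)
qed

lemma sparse_windows:
  assumes "\<not> banach_density_one A"
  shows "\<exists>c::real. c < 1 \<and> (\<exists>a n. \<forall>k. Suc k \<le> n k \<and>
           real (card (A \<inter> {a k..<a k + n k})) < c * real (n k))"
proof -
  have "\<exists>c::real. c < 1 \<and> (\<forall>N\<ge>1. \<exists>a n. n \<ge> N \<and> \<not> real (card (A \<inter> {a..<a+n})) \<ge> c * real n)"
    using assms unfolding banach_density_one_def by blast
  then obtain c :: real where c: "c < 1"
    and sparse: "\<forall>N\<ge>1. \<exists>a n. n \<ge> N \<and> real (card (A \<inter> {a..<a+n})) < c * real n"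
    by (auto simp: not_le)
  have "\<forall>k. \<exists>p. Suc k \<le> snd p \<and> real (card (A \<inter> {fst p..<fst p + snd p})) < c * real (snd p)"
    using sparse by fastforce
  from choice[OF this] obtain p where
    "\<forall>k. Suc k \<le> snd (p k) \<and> real (card (A \<inter> {fst (p k)..<fst (p k) + snd (p k)})) < c * real (snd (p k))"
    by blast
  then show ?thesis using c by (intro exI[of _ c] conjI exI[of _ "fst \<circ> p"] exI[of _ "snd \<circ> p"]) auto
qed

text \<open>(2) \<Longrightarrow> (1): if (x, y) is not Banach proximal, there are \<epsilon> > 0, \<delta> > 0 and arbitrarily
  long windows in which the orbit spends a fraction \<ge> \<delta> of the time in the compact set
  F = {d \<ge> \<epsilon>} of the orbit closure.  Krylov--Bogolyubov then yields an invariant measure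
  charging F, so F meets the support, which therefore leaves the diagonal.\<close>
lemma supp_diagonal_imp_banach_proximal:
  fixes X :: "'a::metric_space set"
  assumes tds: "tds X T" and x: "x \<in> X" and y: "y \<in> X"
    and supp: "supp_sys (pair_orbit_closure T x y) (map_prod T T) \<subseteq> {(z, z) | z. z \<in> X}"
  shows "banach_proximal T x y"
proof (rule ccontr)
  define Near where "Near \<epsilon> = {n. dist ((T ^^ n) x) ((T ^^ n) y) < \<epsilon>}" for \<epsilon>
  assume "\<not> banach_proximal T x y"
  then obtain \<epsilon> where \<epsilon>: "\<epsilon> > 0" and "\<not> banach_density_one (Near \<epsilon>)"
    unfolding banach_proximal_def Near_def by blast
  then obtain c :: real and a n where c: "c < 1" and long: "\<And>k. Suc k \<le> n k"
    and few: "\<And>k. real (card (Near \<epsilon> \<inter> {a k..<a k + n k})) < c * real (n k)"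
    using sparse_windows by blast
  define Z where "Z = pair_orbit_closure T x y"
  define S where "S = map_prod T T"
  define w where "w m = ((T ^^ m) x, (T ^^ m) y)" for m
  note sub = pair_orbit_closure_subsystem[OF tds x y, folded Z_def S_def]
  have wZ: "w m \<in> Z" for m unfolding w_def by (rule sub(5))
  have wS: "S (w m) = w (Suc m)" for m unfolding S_def w_def by simp
  define F where "F = Z \<inter> {p. dist (fst p) (snd p) \<ge> \<epsilon>}"
  have Zc: "closed Z" using sub(1) by (rule compact_imp_closed)
  have Fc: "closed F" unfolding F_def by (intro closed_Int Zc closed_Collect_le continuous_intros)
  have FZ: "F \<subseteq> Z" unfolding F_def by blast
  have freq: "(1 - c) * real (n k) \<le> real (card {m \<in> {a k..<a k + n k}. w m \<in> F})" for k
  proof -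
    define I where "I = {a k..<a k + n k}"
    have "{m \<in> I. w m \<in> F} = I - Near \<epsilon>" unfolding F_def Near_def using wZ by (auto simp: w_def)
    then have "card {m \<in> I. w m \<in> F} = card I - card (Near \<epsilon> \<inter> I)"
      by (simp add: card_Diff_subset_Int Int_commute I_def)
    moreover have "card (Near \<epsilon> \<inter> I) \<le> card I" by (rule card_mono) (auto simp: I_def)
    ultimately have "real (card {m \<in> I. w m \<in> F}) = real (n k) - real (card (Near \<epsilon> \<inter> I))"
      by (simp add: of_nat_diff I_def)
    then show ?thesis using few[of k] unfolding I_def by (simp add: algebra_simps Int_commute)
  qed
  obtain \<mu> where \<mu>inv: "\<mu> \<in> inv_measures Z S" and charge: "measure \<mu> F \<ge> 1 - c"
    using krylov_bogolyubov_windows[OF sub(1,3,4) wZ wS long Fc FZ freq] by blast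
  have "F \<inter> supp_sys Z S \<subseteq> F \<inter> {(z, z) | z. z \<in> X}"
    using supp unfolding Z_def S_def by (rule Int_mono[OF subset_refl])
  also have "\<dots> = {}" unfolding F_def using \<epsilon> by auto
  finally have "F \<inter> supp_sys Z S = {}" by blast
  moreover have "F \<in> sets \<mu>"
    using \<mu>inv closed_restrict_borel[OF Fc FZ Zc] unfolding inv_measures_def by simp
  moreover have "compact F" using compact_Int_closed[OF sub(1) Fc] FZ by (simp add: Int_absorb1)
  ultimately have "measure \<mu> F = 0" using invariant_measure_null_off_supp[OF \<mu>inv] by blast
  then show False using charge c by simp
qed

theorem mainTheorem9:
  fixes X :: "'a::metric_space set" and T :: "'a \<Rightarrow> 'a" and x y :: 'a
  assumes "tds X T" and "x \<in> X" and "y \<in> X"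
  defines "Z \<equiv> closure {((T ^^ n) x, (T ^^ n) y) | n. True}"
  shows "(banach_proximal T x y \<longleftrightarrow> supp_sys Z (map_prod T T) \<subseteq> {(z, z) | z. z \<in> X})
       \<and> (supp_sys Z (map_prod T T) \<subseteq> {(z, z) | z. z \<in> X} \<longleftrightarrow> Z \<subseteq> BP X T)"
proof -
  have Z: "Z = pair_orbit_closure T x y" unfolding Z_def pair_orbit_closure_def ..
  have "banach_proximal T x y \<Longrightarrow> Z \<subseteq> BP X T"
    unfolding Z by (rule banach_proximal_orbit_closure[OF assms(1-3)])
  moreover have "Z \<subseteq> BP X T \<Longrightarrow> supp_sys Z (map_prod T T) \<subseteq> {(z, z) | z. z \<in> X}"
    unfolding Z by (rule orbit_closure_BP_imp_supp_diagonal[OF assms(1-3)])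
  moreover have "supp_sys Z (map_prod T T) \<subseteq> {(z, z) | z. z \<in> X} \<Longrightarrow> banach_proximal T x y"
    unfolding Z by (rule supp_diagonal_imp_banach_proximal[OF assms(1-3)])
  ultimately show ?thesis by blast
qed

end
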